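(* Let $G$ be a spectrally threshold dominated graph on $n$ nodes with $m$ edges. Then there exists a threshold graph $T$ on $n$ nodes with $m$ edges such that $LE(T)\ge LE(G)$.
   Context: All graphs are finite and simple. For a graph $G$ on node set $\{1,\dots,n\}$ with edge set $E$, $m=|E|$, the Laplacian matrix is $L(G)=D(G)-A(G)$ (degree matrix minus adjacency matrix); its eigenvalues, the Laplacian eigenvalues of $G$, are denoted $\lambda_1(G)\ge\lambda_2(G)\ge\dots\ge\lambda_n(G)=0$. The Laplacian energy is $LE(G)=\sum_{i=1}^n\left|\lambda_i(G)-\frac{2m}{n}\right|$. A threshold graph is a graph obtainable from the empty graph by repeatedly adding a new node that is either isolated or adjacent to all previously added nodes. For a graph with degrees $d_1\ge\dots\ge d_n$, the conjugate degrees are $d_i^*=|\{j: d_j\ge i\}|$; for a threshold graph $T$ one has $\lambda_i(T)=d_i^*(T)$ for all $i$. A graph $G$ on $n$ nodes with $m$ edges is spectrally threshold dominated if for each $k\in\{1,\dots,n\}$ there is a threshold graph $T_k$ on $n$ nodes with $m$ edges satisfying $\sum_{i=1}^k\lambda_i(T_k)\ge\sum_{i=1}^k\lambda_i(G)$. *)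

theory Defs
  imports "Jordan_Normal_Form.Char_Poly"
begin

text \<open>Simple graphs on the node set {0..<n} (nodes relabelled from {1..n}),
  edges are 2-element subsets of the node set.\<close>

definition simple_graph :: "nat \<Rightarrow> nat set set \<Rightarrow> bool" where
  "simple_graph n E \<longleftrightarrow> (\<forall>e\<in>E. \<exists>i j. i \<noteq> j \<and> i < n \<and> j < n \<and> e = {i, j})"

definition degree :: "nat set set \<Rightarrow> nat \<Rightarrow> nat" where
  "degree E i = card {e \<in> E. i \<in> e}"

definition laplacian :: "nat \<Rightarrow> nat set set \<Rightarrow> real mat" where
  "laplacian n E = mat n n (\<lambda>(i, j).
      if i = j then real (degree E i) else if {i, j} \<in> E then -1 else 0)"

definition lap_eigs :: "nat \<Rightarrow> nat set set \<Rightarrow> real list" where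
  "lap_eigs n E = rev (sorted_list_of_multiset (proots (char_poly (laplacian n E))))"

definition lap_energy :: "nat \<Rightarrow> nat set set \<Rightarrow> real" where
  "lap_energy n E = (\<Sum>x\<leftarrow>lap_eigs n E. \<bar>x - 2 * real (card E) / real n\<bar>)"

inductive threshold :: "nat set \<Rightarrow> nat set set \<Rightarrow> bool" where
  empty: "threshold {} {}"
| isolated: "threshold V E \<Longrightarrow> v \<notin> V \<Longrightarrow> threshold (insert v V) E"
| dominating: "threshold V E \<Longrightarrow> v \<notin> V \<Longrightarrow>
     threshold (insert v V) (E \<union> {{v, u} | u. u \<in> V})"

definition spectrally_threshold_dominated :: "nat \<Rightarrow> nat set set \<Rightarrow> bool" where
  "spectrally_threshold_dominated n E \<longleftrightarrow>
     (\<forall>k\<in>{1..n}. \<exists>T. threshold {0..<n} T \<and> card T = card E \<and>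
        (\<Sum>i<k. lap_eigs n T ! i) \<ge> (\<Sum>i<k. lap_eigs n E ! i))"

end

theory Submission
  imports Defs "Jordan_Normal_Form.Schur_Decomposition"
begin

text \<open>For reals \<open>x\<^sub>1 \<ge> \<dots> \<ge> x\<^sub>n\<close> with mean \<open>d\<close>, the total deviation
  \<open>\<Sum> \<bar>x\<^sub>i - d\<bar>\<close> is the maximum over \<open>k\<close> of \<open>2 (x\<^sub>1 + \<dots> + x\<^sub>k - k d)\<close>: every \<open>k\<close>
  gives a lower bound, and the number of entries above the mean attains it.
  The Laplacian is real symmetric, so its eigenvalues are real and sum to its trace \<open>2m\<close>;
  their mean is therefore the \<open>2m/n\<close> in the Laplacian energy, and \<open>LE(G)\<close> is the maximum
  of \<open>2 (\<lambda>\<^sub>1(G) + \<dots> + \<lambda>\<^sub>k(G) - k d)\<close>. Taking \<open>k\<close> optimal for \<open>G\<close>, the threshold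
  graph \<open>T\<^sub>k\<close> has a larger \<open>k\<close>-th partial sum, hence energy at least \<open>LE(G)\<close>.\<close>

lemma proots_linear_factors: "proots (\<Prod>r\<leftarrow>rs. [:-r, 1:]) = mset (rs :: 'a::idom list)"
proof (induct rs)
  case (Cons r rs)
  have "(\<Prod>r\<leftarrow>rs. [:-r, 1:]) \<noteq> (0::'a poly)"
    by (auto simp: prod_list_zero_iff)
  then show ?case
    using Cons by (simp add: proots_mult del: mult_pCons_left)
qed simp

definition mat_trace :: "'a::comm_ring_1 mat \<Rightarrow> 'a" where
  "mat_trace A = (\<Sum>i<dim_row A. A $$ (i, i))"

lemma mat_trace_mult_commute:
  fixes A B :: "'a::comm_ring_1 mat"
  assumes A: "A \<in> carrier_mat n m" and B: "B \<in> carrier_mat m n"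
  shows "mat_trace (A * B) = mat_trace (B * A)"
proof -
  have "mat_trace (A * B) = (\<Sum>i<n. \<Sum>j<m. A $$ (i, j) * B $$ (j, i))"
    unfolding mat_trace_def using A B
    by (auto simp: scalar_prod_def atLeast0LessThan intro!: sum.cong)
  also have "\<dots> = (\<Sum>j<m. \<Sum>i<n. B $$ (j, i) * A $$ (i, j))"
    by (subst sum.swap) (simp add: mult.commute)
  also have "\<dots> = mat_trace (B * A)"
    unfolding mat_trace_def using A B
    by (auto simp: scalar_prod_def atLeast0LessThan intro!: sum.cong)
  finally show ?thesis .
qed

lemma mat_trace_similar:
  fixes A B :: "'a::comm_ring_1 mat"
  assumes "similar_mat A B"
  shows "mat_trace A = mat_trace B"
proof -
  obtain n P Q where "{A, B, P, Q} \<subseteq> carrier_mat n n"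
    and QP: "Q * P = 1\<^sub>m n" and A: "A = P * B * Q"
    using similar_matD[OF assms] by blast
  then have B: "B \<in> carrier_mat n n" and P: "P \<in> carrier_mat n n" and Q: "Q \<in> carrier_mat n n"
    by auto
  have "mat_trace A = mat_trace (Q * (P * B))"
    unfolding A by (rule mat_trace_mult_commute[of _ n n]) (use P B Q in auto)
  also have "Q * (P * B) = (Q * P) * B"
    using P B Q by (simp add: assoc_mult_mat)
  finally show ?thesis
    using QP B by simp
qed

text \<open>A Schur decomposition puts the roots on the diagonal of a similar triangular matrix.\<close>

lemma sum_char_poly_roots_eq_trace:
  fixes A :: "'a::conjugatable_ordered_field mat"
  assumes A: "A \<in> carrier_mat n n" and split: "char_poly A = (\<Prod>a\<leftarrow>es. [:-a, 1:])"
  shows "sum_list es = mat_trace A"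
proof -
  obtain B P Q where "schur_decomposition A es = (B, P, Q)"
    by (cases "schur_decomposition A es") auto
  from schur_decomposition[OF A split this]
  have sim: "similar_mat A B" and diag: "diag_mat B = es"
    unfolding similar_mat_def by auto
  have "dim_row B = n"
    using similar_matD[OF sim] A by auto
  then have "mat_trace B = sum_list es"
    unfolding diag[symmetric] diag_mat_def mat_trace_def
    by (simp add: sum_list_sum_nth atLeast0LessThan)
  then show ?thesis
    using mat_trace_similar[OF sim] by simp
qed

lemma real_symmetric_eigenvalue_real:
  fixes A :: "real mat" and l :: complex
  assumes A: "A \<in> carrier_mat n n"
    and sym: "\<And>i j. i < n \<Longrightarrow> j < n \<Longrightarrow> A $$ (i, j) = A $$ (j, i)"
    and ev: "eigenvalue (map_mat complex_of_real A) l"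
  shows "Im l = 0"
proof -
  let ?B = "map_mat complex_of_real A"
  obtain v where v: "v \<in> carrier_vec n" "v \<noteq> 0\<^sub>v n" "?B *\<^sub>v v = l \<cdot>\<^sub>v v"
    using ev A unfolding eigenvalue_def eigenvector_def by auto
  text \<open>The Rayleigh quotient \<open>v\<^sup>* B v / v\<^sup>* v\<close> equals \<open>l\<close> and is real by symmetry.\<close>
  define s where "s = (\<Sum>i<n. cnj (v $ i) * (?B *\<^sub>v v) $ i)"
  define N where "N = (\<Sum>i<n. cmod (v $ i) ^ 2)"
  have s_entries: "s = (\<Sum>i<n. \<Sum>j<n. cnj (v $ i) * of_real (A $$ (i, j)) * v $ j)"
    unfolding s_def using v(1) A
    by (auto simp: scalar_prod_def sum_distrib_left mult.assoc intro!: sum.cong)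
  have "cnj s = (\<Sum>i<n. \<Sum>j<n. v $ i * of_real (A $$ (i, j)) * cnj (v $ j))"
    unfolding s_entries by (simp add: cnj_sum)
  also have "\<dots> = (\<Sum>j<n. \<Sum>i<n. v $ i * of_real (A $$ (i, j)) * cnj (v $ j))"
    by (rule sum.swap)
  also have "\<dots> = s"
    unfolding s_entries by (auto intro!: sum.cong simp: sym mult.commute mult.left_commute)
  finally have "s \<in> \<real>"
    using Reals_cnj_iff by blast
  have norm_square: "z * cnj z = (of_real (cmod z))\<^sup>2" for z :: complex
    by (simp add: complex_norm_square of_real_power[symmetric] del: of_real_power)
  have "s = l * of_real N"
    unfolding s_def N_def using v(1)
    by (auto simp: v(3) sum_distrib_left norm_square mult.commute mult.left_commute
        intro!: sum.cong)
  moreover obtain i where "i < n" "v $ i \<noteq> 0"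
    using v(1,2) by (metis carrier_vecD eq_vecI index_zero_vec)
  then have "N > 0"
    unfolding N_def by (intro sum_pos2[of _ i]) auto
  ultimately show ?thesis
    using \<open>s \<in> \<real>\<close> by (simp add: complex_is_Real_iff)
qed

lemma real_symmetric_char_poly_splits:
  fixes A :: "real mat"
  assumes A: "A \<in> carrier_mat n n"
    and sym: "\<And>i j. i < n \<Longrightarrow> j < n \<Longrightarrow> A $$ (i, j) = A $$ (j, i)"
  obtains rs where "char_poly A = (\<Prod>r\<leftarrow>rs. [:-r, 1:])" "length rs = n"
    "sum_list rs = mat_trace A"
proof -
  let ?B = "map_mat complex_of_real A"
  interpret of_real_poly: map_poly_inj_idom_hom complex_of_real ..
  have B: "?B \<in> carrier_mat n n"
    using A by simp
  obtain as where split: "char_poly ?B = (\<Prod>a\<leftarrow>as. [:-a, 1:])" and len: "length as = n"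
    using char_poly_factorized[OF B] by blast
  have real_roots: "Im a = 0" if "a \<in> set as" for a
  proof -
    have "poly (char_poly ?B) a = 0"
      unfolding split poly_prod_list using that by (auto simp: prod_list_zero_iff)
    then show ?thesis
      using real_symmetric_eigenvalue_real[OF A sym] eigenvalue_root_char_poly[OF B] by blast
  qed
  define rs where "rs = map Re as"
  have as: "as = map complex_of_real rs"
    unfolding rs_def using real_roots
    by (induct as) (auto simp: complex_eq_iff)
  have "map_poly complex_of_real (char_poly A) = char_poly ?B"
    by (rule of_real_hom.char_poly_hom[OF A, symmetric])
  also have "\<dots> = map_poly complex_of_real (\<Prod>r\<leftarrow>rs. [:-r, 1:])"
    unfolding split as by (simp add: of_real_poly.hom_prod_list o_def)
  finally have "char_poly A = (\<Prod>r\<leftarrow>rs. [:-r, 1:])"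
    by (rule of_real_poly.injectivity)
  moreover have "of_real (sum_list rs) = (of_real (mat_trace A) :: complex)"
  proof -
    have "of_real (sum_list rs) = sum_list as"
      unfolding as by (simp add: sum_list_of_real)
    also have "\<dots> = mat_trace ?B"
      by (rule sum_char_poly_roots_eq_trace[OF B split])
    also have "\<dots> = of_real (mat_trace A)"
      unfolding mat_trace_def using A by simp
    finally show ?thesis .
  qed
  moreover have "length rs = n"
    using len by (simp add: rs_def)
  ultimately show ?thesis
    by (metis that of_real_eq_iff)
qed

lemma simple_graph_finite: "simple_graph n E \<Longrightarrow> finite E"
  unfolding simple_graph_def
  by (rule finite_subset[of _ "Pow {..<n}"]) auto

lemma simple_graph_degree_sum:
  assumes "simple_graph n E"
  shows "(\<Sum>i<n. degree E i) = 2 * card E"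
proof -
  have edge_card: "card {i \<in> {..<n}. i \<in> e} = 2" if "e \<in> E" for e
  proof -
    obtain i j where "i \<noteq> j" "i < n" "j < n" "e = {i, j}"
      using assms \<open>e \<in> E\<close> unfolding simple_graph_def by blast
    then have "{i \<in> {..<n}. i \<in> e} = {i, j}" by auto
    then show ?thesis using \<open>i \<noteq> j\<close> by simp
  qed
  have "(\<Sum>i<n. degree E i) = (\<Sum>i<n. \<Sum>e\<in>E. if i \<in> e then 1 else 0)"
    unfolding degree_def
    using simple_graph_finite[OF assms]
    by (auto simp: sum.inter_filter[symmetric] intro!: sum.cong)
  also have "\<dots> = (\<Sum>e\<in>E. card {i \<in> {..<n}. i \<in> e})"
    by (subst sum.swap) (auto simp: sum.inter_filter[symmetric] intro!: sum.cong)
  also have "\<dots> = 2 * card E"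
    using edge_card by simp
  finally show ?thesis .
qed

lemma threshold_edges:
  "threshold V T \<Longrightarrow> e \<in> T \<Longrightarrow> \<exists>i j. i \<noteq> j \<and> i \<in> V \<and> j \<in> V \<and> e = {i, j}"
proof (induction arbitrary: e rule: threshold.induct)
  case (isolated V E v)
  then show ?case
    by (meson insertI2)
next
  case (dominating V E v)
  from dominating.prems consider (old) "e \<in> E" | (new) u where "u \<in> V" "e = {v, u}"
    by blast
  then show ?case
  proof cases
    case old
    then show ?thesis
      using dominating.IH by (meson insertI2)
  next
    case new
    then show ?thesis
      using dominating.hyps(2) by (metis insertI1 insertI2)
  qed
qed simp

lemma threshold_simple_graph: "threshold {0..<n} T \<Longrightarrow> simple_graph n T"
  unfolding simple_graph_def by (metis atLeastLessThan_iff threshold_edges)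

lemma laplacian_carrier: "laplacian n E \<in> carrier_mat n n"
  unfolding laplacian_def by simp

lemma laplacian_symmetric:
  "i < n \<Longrightarrow> j < n \<Longrightarrow> laplacian n E $$ (i, j) = laplacian n E $$ (j, i)"
  unfolding laplacian_def by (auto simp: insert_commute)

lemma mat_trace_laplacian:
  "simple_graph n E \<Longrightarrow> mat_trace (laplacian n E) = 2 * real (card E)"
  unfolding mat_trace_def laplacian_def
  by (simp flip: of_nat_sum add: simple_graph_degree_sum)

lemma lap_eigs_spectrum:
  assumes "simple_graph n E"
  shows "length (lap_eigs n E) = n" "sum_list (lap_eigs n E) = 2 * real (card E)"
    "sorted_wrt (\<ge>) (lap_eigs n E)"
proof -
  obtain rs where split: "char_poly (laplacian n E) = (\<Prod>r\<leftarrow>rs. [:-r, 1:])"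
    and len: "length rs = n" and sum: "sum_list rs = mat_trace (laplacian n E)"
    using real_symmetric_char_poly_splits[OF laplacian_carrier laplacian_symmetric] by blast
  have "proots (char_poly (laplacian n E)) = mset rs"
    unfolding split by (rule proots_linear_factors)
  then have "mset (lap_eigs n E) = mset rs"
    unfolding lap_eigs_def by simp
  then show "length (lap_eigs n E) = n" "sum_list (lap_eigs n E) = 2 * real (card E)"
    using len sum mat_trace_laplacian[OF assms] by (metis size_mset, metis sum_mset_sum_list)
  show "sorted_wrt (\<ge>) (lap_eigs n E)"
    unfolding lap_eigs_def sorted_wrt_rev
    using sorted_sorted_list_of_multiset by (simp only: sorted_wrt_iff_nth_less)
qed

lemma abs_deviation_sum_ge:
  fixes ys :: "real list" and d :: real
  shows "\<bar>sum_list ys - length ys * d\<bar> \<le> (\<Sum>y\<leftarrow>ys. \<bar>y - d\<bar>)"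
  by (induct ys) (auto simp: algebra_simps abs_le_iff)

lemma abs_deviation_sum_above:
  fixes ys :: "real list" and d :: real
  shows "(\<forall>y\<in>set ys. d \<le> y) \<Longrightarrow> (\<Sum>y\<leftarrow>ys. \<bar>y - d\<bar>) = sum_list ys - length ys * d"
  by (induct ys) (auto simp: algebra_simps)

lemma abs_deviation_sum_below:
  fixes ys :: "real list" and d :: real
  shows "(\<forall>y\<in>set ys. y \<le> d) \<Longrightarrow> (\<Sum>y\<leftarrow>ys. \<bar>y - d\<bar>) = length ys * d - sum_list ys"
  by (induct ys) (auto simp: algebra_simps)

lemma abs_deviation_sum_split:
  fixes xs :: "real list" and d :: real
  assumes "sum_list xs = length xs * d"
  shows "(\<Sum>x\<leftarrow>xs. \<bar>x - d\<bar>)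
      = (\<Sum>x\<leftarrow>take k xs. \<bar>x - d\<bar>) + (\<Sum>x\<leftarrow>drop k xs. \<bar>x - d\<bar>)"
    and "sum_list (drop k xs) - length (drop k xs) * d
      = length (take k xs) * d - sum_list (take k xs)"
proof -
  show "(\<Sum>x\<leftarrow>xs. \<bar>x - d\<bar>)
      = (\<Sum>x\<leftarrow>take k xs. \<bar>x - d\<bar>) + (\<Sum>x\<leftarrow>drop k xs. \<bar>x - d\<bar>)"
    by (subst append_take_drop_id[symmetric, of _ k]) (simp only: map_append sum_list_append)
  have "sum_list xs = sum_list (take k xs) + sum_list (drop k xs)"
    by (subst append_take_drop_id[symmetric, of _ k]) (simp only: sum_list_append)
  then show "sum_list (drop k xs) - length (drop k xs) * d
      = length (take k xs) * d - sum_list (take k xs)"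
    using assms by (cases "k \<le> length xs") (simp_all add: of_nat_diff algebra_simps)
qed

lemma abs_deviation_sum_ge_prefix:
  fixes xs :: "real list" and d :: real
  assumes mean: "sum_list xs = length xs * d" and k: "k \<le> length xs"
  shows "(\<Sum>x\<leftarrow>xs. \<bar>x - d\<bar>) \<ge> 2 * (sum_list (take k xs) - k * d)"
  using abs_deviation_sum_split[OF mean, of k] k
    abs_deviation_sum_ge[of "take k xs" d] abs_deviation_sum_ge[of "drop k xs" d]
  by (simp add: min_absorb2)

lemma abs_deviation_sum_eq_prefix:
  fixes xs :: "real list" and d :: real
  assumes mean: "sum_list xs = length xs * d" and sorted: "sorted_wrt (\<ge>) xs"
    and "xs \<noteq> []"
  obtains k where "k \<in> {1..length xs}"
    "(\<Sum>x\<leftarrow>xs. \<bar>x - d\<bar>) = 2 * (sum_list (take k xs) - k * d)"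
proof -
  define k where "k = length (takeWhile (\<lambda>x. x > d) xs)"
  have take: "take k xs = takeWhile (\<lambda>x. x > d) xs"
    unfolding k_def by (metis takeWhile_eq_take)
  have "k \<le> length xs"
    unfolding k_def by (rule length_takeWhile_le)
  have above: "\<forall>x\<in>set (take k xs). d \<le> x"
    unfolding take by (fastforce dest: set_takeWhileD)
  have below: "\<forall>x\<in>set (drop k xs). x \<le> d"
  proof (cases "drop k xs")
    case (Cons y ys)
    have "\<not> y > d"
      using Cons unfolding k_def
      by (metis dropWhile_eq_drop hd_dropWhile list.distinct(1) list.sel(1))
    moreover have "sorted_wrt (\<ge>) (drop k xs)"
      using sorted by (rule sorted_wrt_drop)
    ultimately show ?thesis
      using Cons by auto
  qed simp
  have attained: "(\<Sum>x\<leftarrow>xs. \<bar>x - d\<bar>) = 2 * (sum_list (take k xs) - k * d)"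
    using abs_deviation_sum_split[OF mean, of k] \<open>k \<le> length xs\<close>
      abs_deviation_sum_above[OF above] abs_deviation_sum_below[OF below]
    by (simp add: min_absorb2 algebra_simps)
  text \<open>The prefix of length \<open>0\<close> and the whole list both have deviation \<open>0\<close>.\<close>
  show ?thesis
  proof (cases "k = 0")
    case True
    then show ?thesis
      using that[of "length xs"] attained mean \<open>xs \<noteq> []\<close> by (simp add: Suc_le_eq)
  next
    case False
    then show ?thesis
      using that[of k] attained \<open>k \<le> length xs\<close> by simp
  qed
qed

lemma lap_energy_ge_prefix:
  assumes "simple_graph n E" "k \<le> n" "n > 0"
  shows "lap_energy n E
    \<ge> 2 * ((\<Sum>i<k. lap_eigs n E ! i) - real k * (2 * real (card E) / real n))"
proof -
  note spec = lap_eigs_spectrum[OF assms(1)]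
  have "sum_list (lap_eigs n E)
      = real (length (lap_eigs n E)) * (2 * real (card E) / real n)"
    using spec \<open>n > 0\<close> by simp
  from abs_deviation_sum_ge_prefix[OF this, of k] show ?thesis
    using spec assms(2) unfolding lap_energy_def
    by (simp add: sum_list_sum_nth atLeast0LessThan min_absorb2 o_def)
qed

lemma lap_energy_eq_prefix:
  assumes "simple_graph n E" "n > 0"
  obtains k where "k \<in> {1..n}"
    "lap_energy n E = 2 * ((\<Sum>i<k. lap_eigs n E ! i) - real k * (2 * real (card E) / real n))"
proof -
  note spec = lap_eigs_spectrum[OF assms(1)]
  have mean: "sum_list (lap_eigs n E)
      = real (length (lap_eigs n E)) * (2 * real (card E) / real n)"
    using spec \<open>n > 0\<close> by simp
  have "lap_eigs n E \<noteq> []"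
    using spec(1) \<open>n > 0\<close> by auto
  from abs_deviation_sum_eq_prefix[OF mean spec(3) this] obtain k
    where k: "k \<in> {1..length (lap_eigs n E)}"
      and attained: "(\<Sum>x\<leftarrow>lap_eigs n E. \<bar>x - 2 * real (card E) / real n\<bar>)
        = 2 * (sum_list (take k (lap_eigs n E)) - real k * (2 * real (card E) / real n))" .
  show ?thesis
  proof (rule that)
    show "k \<in> {1..n}"
      using k spec(1) by simp
    show "lap_energy n E
      = 2 * ((\<Sum>i<k. lap_eigs n E ! i) - real k * (2 * real (card E) / real n))"
      using attained k spec(1) unfolding lap_energy_def
      by (simp add: sum_list_sum_nth atLeast0LessThan min_absorb2 o_def)
  qed
qed

theorem theorem1:
  fixes n :: nat and E :: "nat set set"
  assumes "simple_graph n E"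
    and "spectrally_threshold_dominated n E"
  shows "\<exists>T. threshold {0..<n} T \<and> card T = card E \<and> lap_energy n T \<ge> lap_energy n E"
proof (cases "n = 0")
  case True
  then have "E = {}"
    using assms(1) unfolding simple_graph_def by auto
  then show ?thesis
    using True threshold.empty by auto
next
  case False
  then obtain k where k: "k \<in> {1..n}"
    and E_energy: "lap_energy n E
      = 2 * ((\<Sum>i<k. lap_eigs n E ! i) - real k * (2 * real (card E) / real n))"
    using lap_energy_eq_prefix[OF assms(1)] by blast
  obtain T where T: "threshold {0..<n} T" "card T = card E"
    and dom: "(\<Sum>i<k. lap_eigs n T ! i) \<ge> (\<Sum>i<k. lap_eigs n E ! i)"
    using assms(2) k unfolding spectrally_threshold_dominated_def by blast
  have "lap_energy n T
      \<ge> 2 * ((\<Sum>i<k. lap_eigs n T ! i) - real k * (2 * real (card E) / real n))"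
    using lap_energy_ge_prefix[OF threshold_simple_graph[OF T(1)], of k] k False T(2) by simp
  then show ?thesis
    using T E_energy dom by auto
qed

end
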